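(* Let $(A,\rho,[-,-])$ be a Lie algebroid and let $\nabla^{(1)},\nabla^{(2)},\nabla^{(3)}$ be linear connections on $(A,\rho)$. Then for all $u,v,w\in\underline{\mathrm{Sec}}(A)$, $$R_{[\nabla^{(1)},\nabla^{(2)},\nabla^{(3)}]}(u,v)w=R_{\nabla^{(1)}}(u,v)w+R_{\nabla^{(2)}}(u,v)w+R_{\nabla^{(3)}}(u,v)w+2\nabla^{(2)}_{[u,v]}w+\sum_{i\neq j}(-1)^{i+j}[\nabla^{(i)}_u,\nabla^{(j)}_v]w,$$ where $[\nabla^{(1)},\nabla^{(2)},\nabla^{(3)}]:=\nabla^{(1)}-\nabla^{(2)}+\nabla^{(3)}$, the sum runs over ordered pairs $(i,j)$ with $i,j\in\{1,2,3\}$, $i\neq j$, and $[\nabla^{(i)}_u,\nabla^{(j)}_v]w:=\nabla^{(i)}_u\nabla^{(j)}_v w-(-1)^{\widetilde u\widetilde v}\nabla^{(j)}_v\nabla^{(i)}_u w$.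
   Context: All objects are $\mathbb{Z}_2$-graded (supergeometry); the Grassmann parity of an object $x$ is denoted $\widetilde{x}\in\mathbb{Z}_2$. An anchored vector bundle is a vector bundle $\pi: A\to M$ of supermanifolds with a vector bundle homomorphism over the identity $\rho: A\to\mathsf{T}M$; it induces an even $C^\infty(M)$-module map $\rho:\underline{\mathrm{Sec}}(A)\to\mathrm{Vect}(M)$, $\rho_u:=\rho(u)$. A Lie algebroid is an anchored vector bundle together with an $\mathbb{R}$-bilinear bracket $[-,-]$ on $\underline{\mathrm{Sec}}(A)$ such that $\widetilde{[u,v]}=\widetilde u+\widetilde v$, $[u,v]=-(-1)^{\widetilde u\widetilde v}[v,u]$, $[u,fv]=\rho_u(f)v+(-1)^{\widetilde u\widetilde f}f[u,v]$, and $[u,[v,w]]=[[u,v],w]+(-1)^{\widetilde u\widetilde v}[v,[u,w]]$ for all sections $u,v,w$ and $f\in C^\infty(M)$. A linear connection on $(A,\rho)$ is an $\mathbb{R}$-bilinear map $\nabla:\underline{\mathrm{Sec}}(A)\times\underline{\mathrm{Sec}}(A)\to\underline{\mathrm{Sec}}(A)$ with $\widetilde{\nabla_u v}=\widetilde u+\widetilde v$, $\nabla_{fu}v=f\nabla_u v$, and $\nabla_u(fv)=\rho_u(f)v+(-1)^{\widetilde u\widetilde f}f\nabla_u v$. The curvature of a linear connection $\nabla$ on a Lie algebroid is $R_\nabla(u,v)w:=\nabla_u\nabla_v w-(-1)^{\widetilde u\widetilde v}\nabla_v\nabla_u w-\nabla_{[u,v]}w$. *)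

theory Defs
  imports Complex_Main
begin

text \<open>Functions C^\<infinity>(M) form a real superalgebra of type 'f, sections form a
  graded 'f-module of type 's.  A Z2-grading is given by a family
  G :: bool \<Rightarrow> _ set of homogeneous subspaces (False = even, True = odd);
  "x \<in> G p" means x is homogeneous of parity p.  Parities combine by
  exclusive or (p \<noteq> q), and (-1)^(p q) is zsign (p \<and> q).\<close>

definition zsign :: "bool \<Rightarrow> real" where
  "zsign b = (if b then -1 else 1)"

definition graded_space :: "(bool \<Rightarrow> 'a::real_vector set) \<Rightarrow> bool" where
  "graded_space G \<longleftrightarrow>
     (\<forall>p. 0 \<in> G p \<and> (\<forall>x\<in>G p. \<forall>y\<in>G p. x + y \<in> G p) \<and> (\<forall>c. \<forall>x\<in>G p. c *\<^sub>R x \<in> G p)) \<and>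
     (\<forall>x. \<exists>a b. a \<in> G False \<and> b \<in> G True \<and> x = a + b) \<and>
     G False \<inter> G True = {0}"

definition superalgebra :: "(bool \<Rightarrow> 'f::real_algebra_1 set) \<Rightarrow> bool" where
  "superalgebra Gf \<longleftrightarrow> graded_space Gf \<and> 1 \<in> Gf False \<and>
     (\<forall>p q. \<forall>f\<in>Gf p. \<forall>g\<in>Gf q. f * g \<in> Gf (p \<noteq> q) \<and> f * g = zsign (p \<and> q) *\<^sub>R (g * f))"

definition supermodule ::
  "(bool \<Rightarrow> 'f::real_algebra_1 set) \<Rightarrow> (bool \<Rightarrow> 's::real_vector set) \<Rightarrow> ('f \<Rightarrow> 's \<Rightarrow> 's) \<Rightarrow> bool" where
  "supermodule Gf Gs sm \<longleftrightarrow> superalgebra Gf \<and> graded_space Gs \<and>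
     (\<forall>f u v. sm f (u + v) = sm f u + sm f v) \<and>
     (\<forall>f g u. sm (f + g) u = sm f u + sm g u) \<and>
     (\<forall>f g u. sm (f * g) u = sm f (sm g u)) \<and>
     (\<forall>u. sm 1 u = u) \<and>
     (\<forall>c f u. sm (c *\<^sub>R f) u = c *\<^sub>R sm f u \<and> sm f (c *\<^sub>R u) = c *\<^sub>R sm f u) \<and>
     (\<forall>p q. \<forall>f\<in>Gf p. \<forall>u\<in>Gs q. sm f u \<in> Gs (p \<noteq> q))"

definition super_derivation :: "(bool \<Rightarrow> 'f::real_algebra_1 set) \<Rightarrow> bool \<Rightarrow> ('f \<Rightarrow> 'f) \<Rightarrow> bool" where
  "super_derivation Gf r X \<longleftrightarrow>
     (\<forall>f g. X (f + g) = X f + X g) \<and> (\<forall>c f. X (c *\<^sub>R f) = c *\<^sub>R X f) \<and>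
     (\<forall>p. \<forall>f\<in>Gf p. X f \<in> Gf (r \<noteq> p) \<and>
        (\<forall>g. X (f * g) = X f * g + zsign (r \<and> p) *\<^sub>R (f * X g)))"

definition anchored ::
  "(bool \<Rightarrow> 'f::real_algebra_1 set) \<Rightarrow> (bool \<Rightarrow> 's::real_vector set) \<Rightarrow> ('f \<Rightarrow> 's \<Rightarrow> 's)
    \<Rightarrow> ('s \<Rightarrow> 'f \<Rightarrow> 'f) \<Rightarrow> bool" where
  "anchored Gf Gs sm \<rho> \<longleftrightarrow> supermodule Gf Gs sm \<and>
     (\<forall>p. \<forall>u\<in>Gs p. super_derivation Gf p (\<rho> u)) \<and>
     (\<forall>u v g. \<rho> (u + v) g = \<rho> u g + \<rho> v g) \<and>
     (\<forall>c u g. \<rho> (c *\<^sub>R u) g = c *\<^sub>R \<rho> u g) \<and>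
     (\<forall>f u g. \<rho> (sm f u) g = f * \<rho> u g)"

definition rbilinear :: "('s::real_vector \<Rightarrow> 's \<Rightarrow> 's) \<Rightarrow> bool" where
  "rbilinear B \<longleftrightarrow>
     (\<forall>u u' v. B (u + u') v = B u v + B u' v) \<and> (\<forall>u v v'. B u (v + v') = B u v + B u v') \<and>
     (\<forall>c u v. B (c *\<^sub>R u) v = c *\<^sub>R B u v \<and> B u (c *\<^sub>R v) = c *\<^sub>R B u v)"

definition lie_algebroid ::
  "(bool \<Rightarrow> 'f::real_algebra_1 set) \<Rightarrow> (bool \<Rightarrow> 's::real_vector set) \<Rightarrow> ('f \<Rightarrow> 's \<Rightarrow> 's)
    \<Rightarrow> ('s \<Rightarrow> 'f \<Rightarrow> 'f) \<Rightarrow> ('s \<Rightarrow> 's \<Rightarrow> 's) \<Rightarrow> bool" where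
  "lie_algebroid Gf Gs sm \<rho> br \<longleftrightarrow> anchored Gf Gs sm \<rho> \<and> rbilinear br \<and>
     (\<forall>p q. \<forall>u\<in>Gs p. \<forall>v\<in>Gs q.
        br u v \<in> Gs (p \<noteq> q) \<and>
        br u v = - (zsign (p \<and> q) *\<^sub>R br v u) \<and>
        (\<forall>r. \<forall>f\<in>Gf r. br u (sm f v) = sm (\<rho> u f) v + zsign (p \<and> r) *\<^sub>R sm f (br u v)) \<and>
        (\<forall>w. br u (br v w) = br (br u v) w + zsign (p \<and> q) *\<^sub>R br v (br u w)))"

definition linear_connection ::
  "(bool \<Rightarrow> 'f::real_algebra_1 set) \<Rightarrow> (bool \<Rightarrow> 's::real_vector set) \<Rightarrow> ('f \<Rightarrow> 's \<Rightarrow> 's)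
    \<Rightarrow> ('s \<Rightarrow> 'f \<Rightarrow> 'f) \<Rightarrow> ('s \<Rightarrow> 's \<Rightarrow> 's) \<Rightarrow> bool" where
  "linear_connection Gf Gs sm \<rho> N \<longleftrightarrow> rbilinear N \<and>
     (\<forall>p q. \<forall>u\<in>Gs p. \<forall>v\<in>Gs q. N u v \<in> Gs (p \<noteq> q)) \<and>
     (\<forall>f u v. N (sm f u) v = sm f (N u v)) \<and>
     (\<forall>p r. \<forall>u\<in>Gs p. \<forall>f\<in>Gf r. \<forall>v. N u (sm f v) = sm (\<rho> u f) v + zsign (p \<and> r) *\<^sub>R sm f (N u v))"

definition curvature :: "('s::real_vector \<Rightarrow> 's \<Rightarrow> 's) \<Rightarrow> ('s \<Rightarrow> 's \<Rightarrow> 's) \<Rightarrow> bool \<Rightarrow> bool \<Rightarrow> 's \<Rightarrow> 's \<Rightarrow> 's \<Rightarrow> 's" where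
  "curvature br N p q u v w = N u (N v w) - zsign (p \<and> q) *\<^sub>R N v (N u w) - N (br u v) w"

definition conn_comm :: "('s::real_vector \<Rightarrow> 's \<Rightarrow> 's) \<Rightarrow> ('s \<Rightarrow> 's \<Rightarrow> 's) \<Rightarrow> bool \<Rightarrow> bool \<Rightarrow> 's \<Rightarrow> 's \<Rightarrow> 's \<Rightarrow> 's" where
  "conn_comm N1 N2 p q u v w = N1 u (N2 v w) - zsign (p \<and> q) *\<^sub>R N2 v (N1 u w)"

end

theory Submission
  imports Defs
begin

text \<open>Each connection is \<open>\<real>\<close>-linear in its second argument, so the curvature of a
  combination \<open>\<Sum>\<^sub>i c\<^sub>i \<nabla>\<^sup>i\<close> expands into a double sum over pairs \<open>(i, j)\<close>. The diagonal
  terms give \<open>c\<^sub>i\<^sup>2 R\<^sub>\<nabla>\<^sub>i\<close>, up to the correction \<open>(c\<^sub>i\<^sup>2 - c\<^sub>i) \<nabla>\<^sup>i\<^sub>[\<^sub>u\<^sub>,\<^sub>v\<^sub>]\<close> coming from the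
  bracket term, which is linear rather than quadratic in the coefficients; the terms for
  \<open>(i, j)\<close> and \<open>(j, i)\<close> pair up into graded commutators. For \<open>c = (1, -1, 1)\<close> one has
  \<open>c\<^sub>i c\<^sub>j = (-1)\<^sup>i\<^sup>+\<^sup>j\<close> and the correction survives only for \<open>i = 2\<close>.\<close>

lemma rbilinear_linear_right:
  assumes "rbilinear B"
  shows "linear (B x)"
  using assms unfolding rbilinear_def by unfold_locales auto

lemma linear_connection_linear_right:
  assumes "linear_connection Gf Gs sm \<rho> N"
  shows "linear (N x)"
  using assms unfolding linear_connection_def by (blast intro: rbilinear_linear_right)

lemma sum_offdiag_swap:
  assumes "finite I"
  shows "(\<Sum>i\<in>I. \<Sum>j\<in>I - {i}. f i j) = (\<Sum>i\<in>I. \<Sum>j\<in>I - {i}. f j i)"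
proof -
  have offdiag: "(\<Sum>j\<in>I - {i}. g j) = (\<Sum>j\<in>I. if j = i then 0 else g j)" for i and g :: "'a \<Rightarrow> 'b"
    using assms by (simp add: sum.If_cases Diff_eq)
  show ?thesis
    unfolding offdiag using sum.swap[of "\<lambda>i j. if j = i then 0 else f i j" I I]
    by (simp add: eq_commute)
qed

lemma sum_split_diag:
  assumes "finite I"
  shows "(\<Sum>i\<in>I. \<Sum>j\<in>I. f i j) = (\<Sum>i\<in>I. f i i) + (\<Sum>i\<in>I. \<Sum>j\<in>I - {i}. f i j)"
  using assms by (simp add: sum.remove sum.distrib)

lemma curvature_linear_combination:
  fixes N :: "'i \<Rightarrow> 's::real_vector \<Rightarrow> 's \<Rightarrow> 's"
  assumes "finite I" and lin: "\<And>i x. i \<in> I \<Longrightarrow> linear (N i x)"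
  shows "curvature br (\<lambda>x y. \<Sum>i\<in>I. c i *\<^sub>R N i x y) p q u v w
       = (\<Sum>i\<in>I. (c i)\<^sup>2 *\<^sub>R curvature br (N i) p q u v w)
         + (\<Sum>i\<in>I. ((c i)\<^sup>2 - c i) *\<^sub>R N i (br u v) w)
         + (\<Sum>i\<in>I. \<Sum>j\<in>I - {i}. (c i * c j) *\<^sub>R conn_comm (N i) (N j) p q u v w)"
proof -
  let ?z = "zsign (p \<and> q)"
  have expand: "(\<Sum>i\<in>I. c i *\<^sub>R N i x (\<Sum>j\<in>I. c j *\<^sub>R N j y w))
      = (\<Sum>i\<in>I. \<Sum>j\<in>I. (c i * c j) *\<^sub>R N i x (N j y w))" for x y
    by (intro sum.cong refl)
       (simp add: lin linear_sum linear_cmul scaleR_sum_right)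
  have diag: "(\<Sum>i\<in>I. (c i * c i) *\<^sub>R N i u (N i v w)) - ?z *\<^sub>R (\<Sum>i\<in>I. (c i * c i) *\<^sub>R N i v (N i u w))
      = (\<Sum>i\<in>I. (c i)\<^sup>2 *\<^sub>R curvature br (N i) p q u v w) + (\<Sum>i\<in>I. (c i)\<^sup>2 *\<^sub>R N i (br u v) w)"
  proof -
    have "(c i)\<^sup>2 *\<^sub>R curvature br (N i) p q u v w + (c i)\<^sup>2 *\<^sub>R N i (br u v) w
        = (c i * c i) *\<^sub>R N i u (N i v w) - ?z *\<^sub>R ((c i * c i) *\<^sub>R N i v (N i u w))" for i
      by (simp add: curvature_def power2_eq_square algebra_simps)
    then show ?thesis
      by (simp add: scaleR_sum_right sum_subtractf flip: sum.distrib)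
  qed
  have offdiag: "(\<Sum>i\<in>I. \<Sum>j\<in>I - {i}. (c i * c j) *\<^sub>R N i u (N j v w))
      - ?z *\<^sub>R (\<Sum>i\<in>I. \<Sum>j\<in>I - {i}. (c i * c j) *\<^sub>R N i v (N j u w))
      = (\<Sum>i\<in>I. \<Sum>j\<in>I - {i}. (c i * c j) *\<^sub>R conn_comm (N i) (N j) p q u v w)"
  proof -
    have "(c i * c j) *\<^sub>R conn_comm (N i) (N j) p q u v w
        = (c i * c j) *\<^sub>R N i u (N j v w) - ?z *\<^sub>R ((c j * c i) *\<^sub>R N j v (N i u w))" for i j
      by (simp add: conn_comm_def algebra_simps)
    moreover have "(\<Sum>i\<in>I. \<Sum>j\<in>I - {i}. (c i * c j) *\<^sub>R N i v (N j u w))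
        = (\<Sum>i\<in>I. \<Sum>j\<in>I - {i}. (c j * c i) *\<^sub>R N j v (N i u w))"
      by (rule sum_offdiag_swap[OF \<open>finite I\<close>])
    ultimately show ?thesis
      by (simp only: scaleR_sum_right flip: sum_subtractf)
  qed
  have correction: "(\<Sum>i\<in>I. ((c i)\<^sup>2 - c i) *\<^sub>R N i (br u v) w)
      = (\<Sum>i\<in>I. (c i)\<^sup>2 *\<^sub>R N i (br u v) w) - (\<Sum>i\<in>I. c i *\<^sub>R N i (br u v) w)"
    by (simp add: scaleR_diff_left sum_subtractf)
  have "curvature br (\<lambda>x y. \<Sum>i\<in>I. c i *\<^sub>R N i x y) p q u v w
      = ((\<Sum>i\<in>I. (c i * c i) *\<^sub>R N i u (N i v w)) - ?z *\<^sub>R (\<Sum>i\<in>I. (c i * c i) *\<^sub>R N i v (N i u w)))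
        + ((\<Sum>i\<in>I. \<Sum>j\<in>I - {i}. (c i * c j) *\<^sub>R N i u (N j v w))
           - ?z *\<^sub>R (\<Sum>i\<in>I. \<Sum>j\<in>I - {i}. (c i * c j) *\<^sub>R N i v (N j u w)))
        - (\<Sum>i\<in>I. c i *\<^sub>R N i (br u v) w)"
    unfolding curvature_def expand sum_split_diag[OF \<open>finite I\<close>]
    by (simp add: scaleR_right_distrib)
  then show ?thesis
    unfolding diag offdiag correction by simp
qed

theorem mainTheorem4:
  fixes Gf :: "bool \<Rightarrow> 'f::real_algebra_1 set" and Gs :: "bool \<Rightarrow> 's::real_vector set"
    and sm :: "'f \<Rightarrow> 's \<Rightarrow> 's" and \<rho> :: "'s \<Rightarrow> 'f \<Rightarrow> 'f" and br :: "'s \<Rightarrow> 's \<Rightarrow> 's"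
    and N :: "nat \<Rightarrow> 's \<Rightarrow> 's \<Rightarrow> 's"
  assumes "lie_algebroid Gf Gs sm \<rho> br"
    and "\<forall>i\<in>{1,2,3}. linear_connection Gf Gs sm \<rho> (N i)"
    and "u \<in> Gs p" and "v \<in> Gs q"
  shows "curvature br (\<lambda>x y. N 1 x y - N 2 x y + N 3 x y) p q u v w
       = curvature br (N 1) p q u v w + curvature br (N 2) p q u v w + curvature br (N 3) p q u v w
         + 2 *\<^sub>R N 2 (br u v) w
         + (\<Sum>i\<in>{1,2,3}. \<Sum>j\<in>{1,2,3} - {i}. (-1) ^ (i + j) *\<^sub>R conn_comm (N i) (N j) p q u v w)"
proof -
  define c :: "nat \<Rightarrow> real" where "c i = (-1) ^ Suc i" for i
  have alternating_sum: "(\<lambda>x y. N 1 x y - N 2 x y + N 3 x y) = (\<lambda>x y. \<Sum>i\<in>{1,2,3}. c i *\<^sub>R N i x y)"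
    by (simp add: c_def algebra_simps)
  have "c i * c j = (-1) ^ (i + j)" for i j
    by (simp add: c_def power_add)
  moreover have "(\<Sum>i\<in>{1,2,3}. (c i)\<^sup>2 *\<^sub>R curvature br (N i) p q u v w)
      = curvature br (N 1) p q u v w + curvature br (N 2) p q u v w + curvature br (N 3) p q u v w"
    by (simp add: c_def)
  moreover have "(\<Sum>i\<in>{1,2,3}. ((c i)\<^sup>2 - c i) *\<^sub>R N i (br u v) w) = 2 *\<^sub>R N 2 (br u v) w"
    by (simp add: c_def)
  moreover have "\<And>i x. i \<in> {1,2,3} \<Longrightarrow> linear (N i x)"
    using assms(2) by (blast intro: linear_connection_linear_right)
  ultimately show ?thesis
    unfolding alternating_sum by (subst curvature_linear_combination) auto
qed

end
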